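(* Let $n\ge1$ and $k\ge1$ be integers. Then $$|\mathrm{SVT}((k),n)|=\binom{n+k-1}{k}\,{}_2F_1\!\left(\begin{matrix}k,\;1-n\\ k+1\end{matrix};-1\right).$$
   Context: Let $[n]=\{1,\dots,n\}$. For a partition $\lambda$ with at most $n$ nonzero parts, identified with its Young diagram $\{(i,j): 1\le j\le\lambda_i\}$ (row index $i$ increasing downward, column index $j$ to the right), a set-valued tableau of shape $\lambda$ with entries in $[n]$ assigns to every box $(i,j)$ a nonempty subset $T_{i,j}\subseteq[n]$ such that $\max T_{i,j}\le\min T_{i,j+1}$ and $\max T_{i,j}<\min T_{i+1,j}$ whenever these boxes exist; $\mathrm{SVT}(\lambda,n)$ is the set of these tableaux, and $(k)$ is the one-row partition with $k$ boxes. $(a)_0=1$, $(a)_m=a(a+1)\cdots(a+m-1)$, and ${}_2F_1\!\left(\begin{smallmatrix}a,\,b\\ c\end{smallmatrix};z\right)=\sum_{m\ge0}\frac{(a)_m(b)_m}{(c)_m}\frac{z^m}{m!}$, a finite sum when $b$ is a nonpositive integer. *)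

theory Defs
  imports Complex_Main
begin

text \<open>A partition is represented as a weakly decreasing list of positive parts
  lam = [lam_1, ..., lam_l]. Its Young diagram, with rows i and columns j
  indexed from 1.\<close>

definition is_partition :: "nat list \<Rightarrow> bool" where
  "is_partition lam \<longleftrightarrow> sorted (rev lam) \<and> (\<forall>x\<in>set lam. 0 < x)"

definition young_diagram :: "nat list \<Rightarrow> (nat \<times> nat) set" where
  "young_diagram lam = {(i, j). 1 \<le> i \<and> i \<le> length lam \<and> 1 \<le> j \<and> j \<le> lam ! (i - 1)}"

text \<open>A tableau is a function
  from boxes to subsets of [n]; it is taken to be the empty set outside the diagram
  so that distinct tableaux are distinct functions.\<close>

definition SVT :: "nat list \<Rightarrow> nat \<Rightarrow> ((nat \<times> nat) \<Rightarrow> nat set) set" where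
  "SVT lam n = {T.
     (\<forall>b. b \<notin> young_diagram lam \<longrightarrow> T b = {}) \<and>
     (\<forall>b\<in>young_diagram lam. T b \<noteq> {} \<and> T b \<subseteq> {1..n}) \<and>
     (\<forall>i j. (i, j) \<in> young_diagram lam \<and> (i, j + 1) \<in> young_diagram lam
              \<longrightarrow> Max (T (i, j)) \<le> Min (T (i, j + 1))) \<and>
     (\<forall>i j. (i, j) \<in> young_diagram lam \<and> (i + 1, j) \<in> young_diagram lam
              \<longrightarrow> Max (T (i, j)) < Min (T (i + 1, j)))}"

definition hyp2F1 :: "real \<Rightarrow> real \<Rightarrow> real \<Rightarrow> real \<Rightarrow> real" where
  "hyp2F1 a b c z = (\<Sum>m. pochhammer a m * pochhammer b m / pochhammer c m * z ^ m / fact m)"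

end

theory Submission
  imports Defs
begin

text \<open>Write c(k,n) = |SVT((k),n)|. Removing the last box of a one-row tableau with entries
  in [n] leaves a one-row tableau with entries in [b], where b is the minimum of the removed set;
  conversely the last box can be any of the 2^(n-b) subsets of [b,n] containing b. Hence
  c(k+1,n) = \<Sum>b\<le>n. 2^(n-b) c(k,b), i.e. c(k+1,n+1) = 2 c(k+1,n) + c(k,n+1). By Pascal's rule
  the binomial sum \<Sum>m. C(n+k-1,k+m) C(k-1+m,m) obeys the same recurrence and boundary values,
  and its m-th term equals C(n+k-1,k) C(n-1,m) k/(k+m), the m-th term of the terminating 2F1
  at -1.\<close>

lemma finite_young_diagram: "finite (young_diagram lam)"
proof (rule finite_subset)
  show "young_diagram lam \<subseteq> (SIGMA i:{1..length lam}. {1..lam ! (i - 1)})"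
    unfolding young_diagram_def by auto
qed auto

lemma finite_SVT: "finite (SVT lam n)"
proof (rule finite_subset)
  show "SVT lam n \<subseteq> {T. \<forall>b. (b \<in> young_diagram lam \<longrightarrow> T b \<in> Pow {1..n})
                              \<and> (b \<notin> young_diagram lam \<longrightarrow> T b = {})}"
    unfolding SVT_def by auto
  show "finite \<dots>"
    by (intro finite_set_of_finite_funs finite_young_diagram) simp
qed

lemma SVT_single_row_iff:
  "T \<in> SVT [k] n \<longleftrightarrow>
     (\<forall>i j. \<not> (i = 1 \<and> 1 \<le> j \<and> j \<le> k) \<longrightarrow> T (i, j) = {}) \<and>
     (\<forall>j. 1 \<le> j \<and> j \<le> k \<longrightarrow> T (1, j) \<noteq> {} \<and> T (1, j) \<subseteq> {1..n}) \<and>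
     (\<forall>j. 1 \<le> j \<and> j < k \<longrightarrow> Max (T (1, j)) \<le> Min (T (1, Suc j)))"
proof -
  have "young_diagram [k] = {(i, j). i = 1 \<and> 1 \<le> j \<and> j \<le> k}"
    unfolding young_diagram_def by auto
  then show ?thesis
    unfolding SVT_def by (auto simp: Suc_le_eq)
qed

lemma SVT_empty_row: "SVT [0] n = {\<lambda>_. {}}"
  by (auto simp: SVT_single_row_iff)

lemma SVT_single_row_box:
  assumes "T \<in> SVT [k] n" "1 \<le> j" "j \<le> k"
  shows "finite (T (1, j))" "T (1, j) \<noteq> {}" "T (1, j) \<subseteq> {1..n}"
  using assms finite_subset[of "T (1, j)" "{1..n}"] by (auto simp: SVT_single_row_iff)

lemma SVT_single_row_Max_mono:
  assumes T: "T \<in> SVT [k] n" and "1 \<le> i" "i \<le> j" "j \<le> k"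
  shows "Max (T (1, i)) \<le> Max (T (1, j))"
  using \<open>i \<le> j\<close> \<open>j \<le> k\<close>
proof (induction j rule: dec_induct)
  case (step m)
  have "Max (T (1, i)) \<le> Max (T (1, m))" using step by simp
  also have "\<dots> \<le> Min (T (1, Suc m))"
    using T step \<open>1 \<le> i\<close> by (auto simp: SVT_single_row_iff)
  also have "\<dots> \<le> Max (T (1, Suc m))"
    using SVT_single_row_box(1,2)[OF T, of "Suc m"] step.prems by (simp add: Min_le_iff)
  finally show ?case .
qed simp

definition sets_with_min :: "nat \<Rightarrow> nat \<Rightarrow> nat set set" where
  "sets_with_min b n = {S. b \<in> S \<and> S \<subseteq> {b..n}}"

lemma Min_sets_with_min: "S \<in> sets_with_min b n \<Longrightarrow> Min S = b"
  unfolding sets_with_min_def by (intro Min_eqI) (auto intro: finite_subset)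

lemma finite_sets_with_min: "finite (sets_with_min b n)"
  unfolding sets_with_min_def by (rule finite_subset[of _ "Pow {b..n}"]) auto

lemma card_sets_with_min:
  assumes "b \<le> n"
  shows "card (sets_with_min b n) = 2 ^ (n - b)"
proof -
  have "sets_with_min b n = insert b ` Pow {Suc b..n}"
  proof (intro equalityI subsetI)
    fix S assume "S \<in> sets_with_min b n"
    then have "S = insert b (S - {b})" "S - {b} \<in> Pow {Suc b..n}"
      unfolding sets_with_min_def by auto
    then show "S \<in> insert b ` Pow {Suc b..n}" by blast
  qed (use assms in \<open>auto simp: sets_with_min_def\<close>)
  moreover have "inj_on (insert b) (Pow {Suc b..n})"
  proof (rule inj_onI)
    fix X Y assume "X \<in> Pow {Suc b..n}" "Y \<in> Pow {Suc b..n}" "insert b X = insert b Y"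
    moreover have "b \<notin> X" "b \<notin> Y"
      using calculation(1,2) by auto
    ultimately show "X = Y" by (metis Diff_insert_absorb)
  qed
  ultimately show ?thesis by (simp add: card_image card_Pow)
qed

definition append_box :: "nat \<Rightarrow> (nat \<times> nat \<Rightarrow> nat set) \<times> nat set \<Rightarrow> nat \<times> nat \<Rightarrow> nat set" where
  "append_box k = (\<lambda>(T, S). T((1, Suc k) := S))"

lemma append_box_in_SVT:
  assumes T: "T \<in> SVT [k] b" and S: "S \<in> sets_with_min b n" and b: "b \<in> {1..n}"
  shows "append_box k (T, S) \<in> SVT [Suc k] n"
proof -
  have row: "T (1, j) \<noteq> {} \<and> T (1, j) \<subseteq> {1..b}" if "1 \<le> j" "j \<le> k" for j
    using SVT_single_row_box[OF T] that by blast
  have last: "Max (T (1, k)) \<le> Min S" if "1 \<le> k"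
    using row[of k] SVT_single_row_box(1)[OF T, of k] that Min_sets_with_min[OF S] by auto
  have "S \<noteq> {}" "S \<subseteq> {1..n}"
    using S b unfolding sets_with_min_def by auto
  let ?T = "T((1, Suc k) := S)"
  have outside: "\<forall>i j. \<not> (i = 1 \<and> 1 \<le> j \<and> j \<le> Suc k) \<longrightarrow> ?T (i, j) = {}"
    using T by (auto simp: SVT_single_row_iff)
  have boxes: "\<forall>j. 1 \<le> j \<and> j \<le> Suc k \<longrightarrow> ?T (1, j) \<noteq> {} \<and> ?T (1, j) \<subseteq> {1..n}"
    using row b \<open>S \<noteq> {}\<close> \<open>S \<subseteq> {1..n}\<close> by (fastforce simp: le_Suc_eq)
  have order: "\<forall>j. 1 \<le> j \<and> j < Suc k \<longrightarrow> Max (?T (1, j)) \<le> Min (?T (1, Suc j))"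
  proof (intro allI impI)
    fix j assume j: "1 \<le> j \<and> j < Suc k"
    show "Max (?T (1, j)) \<le> Min (?T (1, Suc j))"
    proof (cases "j = k")
      case True
      then show ?thesis using last j by simp
    next
      case False
      with j T show ?thesis by (simp add: SVT_single_row_iff)
    qed
  qed
  show ?thesis
    unfolding append_box_def SVT_single_row_iff using outside boxes order by simp
qed

lemma SVT_remove_last_box:
  assumes T: "T \<in> SVT [Suc k] n"
  defines "b \<equiv> Min (T (1, Suc k))"
  shows "T((1, Suc k) := {}) \<in> SVT [k] b"
    and "T (1, Suc k) \<in> sets_with_min b n"
    and "b \<in> {1..n}"
proof -
  note last = SVT_single_row_box[OF T, of "Suc k", simplified]
  show S: "T (1, Suc k) \<in> sets_with_min b n"
    using last unfolding b_def sets_with_min_def by auto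
  then show "b \<in> {1..n}"
    using last unfolding sets_with_min_def by auto
  have Max_le_b: "Max (T (1, j)) \<le> b" if "1 \<le> j" "j \<le> k" for j
  proof -
    have "Max (T (1, j)) \<le> Max (T (1, k))"
      using SVT_single_row_Max_mono[OF T] that by simp
    also have "\<dots> \<le> b"
      using T that unfolding b_def SVT_single_row_iff by auto
    finally show ?thesis .
  qed
  have "T (1, j) \<subseteq> {1..b}" if "1 \<le> j" "j \<le> k" for j
  proof
    fix x assume x: "x \<in> T (1, j)"
    have "finite (T (1, j))" "T (1, j) \<subseteq> {1..n}"
      using SVT_single_row_box[OF T, of j] that by auto
    with x have "1 \<le> x" "x \<le> Max (T (1, j))" by auto
    with Max_le_b[OF that] show "x \<in> {1..b}" by simp
  qed
  then show "T((1, Suc k) := {}) \<in> SVT [k] b"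
    using T unfolding SVT_single_row_iff by auto
qed

lemma SVT_single_row_Suc:
  "SVT [Suc k] n = (\<Union>b\<in>{1..n}. append_box k ` (SVT [k] b \<times> sets_with_min b n))"
proof (intro equalityI subsetI)
  fix T assume T: "T \<in> SVT [Suc k] n"
  have "T = append_box k (T((1, Suc k) := {}), T (1, Suc k))"
    by (simp add: append_box_def)
  with SVT_remove_last_box[OF T] show "T \<in> (\<Union>b\<in>{1..n}. append_box k ` (SVT [k] b \<times> sets_with_min b n))"
    by blast
qed (auto intro: append_box_in_SVT)

lemma Min_last_box_append_box:
  "p \<in> X \<times> sets_with_min b n \<Longrightarrow> Min (append_box k p (1, Suc k)) = b"
  by (auto simp: append_box_def Min_sets_with_min)

lemma inj_on_append_box: "inj_on (append_box k) (SVT [k] b \<times> X)"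
proof (rule inj_onI, clarify)
  fix T S T' S'
  assume T: "T \<in> SVT [k] b" and T': "T' \<in> SVT [k] b"
    and eq: "append_box k (T, S) = append_box k (T', S')"
  have "T (1, Suc k) = {}" "T' (1, Suc k) = {}"
    using T T' by (simp_all add: SVT_single_row_iff)
  then have "T = (append_box k (T, S))((1, Suc k) := {})"
    and "T' = (append_box k (T', S'))((1, Suc k) := {})"
    by (simp_all add: append_box_def fun_upd_idem)
  moreover have "S = append_box k (T, S) (1, Suc k)" "S' = append_box k (T', S') (1, Suc k)"
    by (simp_all add: append_box_def)
  ultimately show "T = T' \<and> S = S'"
    using eq by metis
qed

lemma card_SVT_single_row_Suc:
  "card (SVT [Suc k] n) = (\<Sum>b\<in>{1..n}. 2 ^ (n - b) * card (SVT [k] b))"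
proof -
  let ?A = "\<lambda>b. append_box k ` (SVT [k] b \<times> sets_with_min b n)"
  have "Min (T (1, Suc k)) = b" if "T \<in> ?A b" for T b
    using that Min_last_box_append_box by blast
  then have disjoint: "?A b \<inter> ?A b' = {}" if "b \<noteq> b'" for b b'
    using that by blast
  have "card (SVT [Suc k] n) = (\<Sum>b\<in>{1..n}. card (?A b))"
    unfolding SVT_single_row_Suc
    by (rule card_UN_disjoint) (auto simp: finite_SVT finite_sets_with_min disjoint)
  also have "\<dots> = (\<Sum>b\<in>{1..n}. 2 ^ (n - b) * card (SVT [k] b))"
    by (rule sum.cong)
      (simp_all add: card_image[OF inj_on_append_box] card_cartesian_product card_sets_with_min)
  finally show ?thesis .
qed

lemma card_SVT_single_row_Suc_Suc:
  "card (SVT [Suc k] (Suc n)) = 2 * card (SVT [Suc k] n) + card (SVT [k] (Suc n))"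
proof -
  have "(\<Sum>b\<in>{1..n}. 2 ^ (Suc n - b) * card (SVT [k] b)) =
        2 * (\<Sum>b\<in>{1..n}. 2 ^ (n - b) * card (SVT [k] b))"
    by (simp add: sum_distrib_left Suc_diff_le mult.assoc)
  then show ?thesis
    by (simp add: card_SVT_single_row_Suc sum.cl_ivl_Suc)
qed

lemma card_SVT_single_row_one: "card (SVT [k] (Suc 0)) = 1"
  by (induction k) (simp_all add: SVT_empty_row card_SVT_single_row_Suc)

text \<open>Indexed by K = k - 1 and N = n - 1 to avoid truncated subtraction.\<close>

definition one_row_sum :: "nat \<Rightarrow> nat \<Rightarrow> nat" where
  "one_row_sum K N = (\<Sum>m\<le>N. (N + K + 1 choose (K + 1 + m)) * (K + m choose m))"

lemma one_row_sum_0_right: "one_row_sum K 0 = 1"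
  by (simp add: one_row_sum_def)

lemma one_row_sum_0_left: "one_row_sum 0 N + 1 = 2 ^ Suc N"
proof -
  have "2 ^ Suc N = (\<Sum>m\<le>Suc N. Suc N choose m)"
    by (simp only: choose_row_sum)
  also have "\<dots> = 1 + (\<Sum>m\<le>N. Suc N choose Suc m)"
    by (subst sum.atMost_Suc_shift) simp
  finally show ?thesis
    by (simp add: one_row_sum_def)
qed

lemma one_row_sum_Suc_Suc:
  "one_row_sum (Suc K) (Suc N) = 2 * one_row_sum (Suc K) N + one_row_sum K (Suc N)"
proof -
  let ?a = "N + K + 2"
  have pascal_upper: "(Suc N + Suc K + 1 choose (Suc K + 1 + m)) =
      (?a choose (K + 1 + m)) + (?a choose (K + 2 + m))" for m
    using binomial_Suc_Suc[of ?a "K + 1 + m"] by simp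
  have pascal_lower:
    "(K + 1 + m choose m) = (K + m choose m) + (if m = 0 then 0 else K + m choose (m - 1))" for m
    using choose_reduce_nat[of "K + 1 + m" m] by (cases m) simp_all
  have "(Suc N + Suc K + 1 choose (Suc K + 1 + m)) * (Suc K + m choose m) =
      (?a choose (K + 2 + m)) * (K + 1 + m choose m) + (?a choose (K + 1 + m)) * (K + m choose m)
      + (?a choose (K + 1 + m)) * (if m = 0 then 0 else K + m choose (m - 1))" for m
  proof -
    have "(?a choose (K + 1 + m)) * (K + 1 + m choose m) =
        (?a choose (K + 1 + m)) * (K + m choose m)
        + (?a choose (K + 1 + m)) * (if m = 0 then 0 else K + m choose (m - 1))"
      by (simp only: pascal_lower distrib_left)
    with pascal_upper[of m] show ?thesis
      by (simp add: algebra_simps)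
  qed
  then have split: "one_row_sum (Suc K) (Suc N) =
      (\<Sum>m\<le>Suc N. (?a choose (K + 2 + m)) * (K + 1 + m choose m))
      + (\<Sum>m\<le>Suc N. (?a choose (K + 1 + m)) * (K + m choose m))
      + (\<Sum>m\<le>Suc N. (?a choose (K + 1 + m)) * (if m = 0 then 0 else K + m choose (m - 1)))"
    unfolding one_row_sum_def sum.distrib[symmetric] by (intro sum.cong refl)
  have "(\<Sum>m\<le>Suc N. (?a choose (K + 2 + m)) * (K + 1 + m choose m)) = one_row_sum (Suc K) N"
    by (simp add: one_row_sum_def algebra_simps)
  moreover have "(\<Sum>m\<le>Suc N. (?a choose (K + 1 + m)) * (K + m choose m)) = one_row_sum K (Suc N)"
    by (simp add: one_row_sum_def algebra_simps)
  moreover have "(\<Sum>m\<le>Suc N. (?a choose (K + 1 + m)) * (if m = 0 then 0 else K + m choose (m - 1)))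
      = one_row_sum (Suc K) N"
    by (subst sum.atMost_Suc_shift) (simp add: one_row_sum_def algebra_simps)
  ultimately show ?thesis
    using split by simp
qed

lemma card_SVT_single_row_eq_one_row_sum: "card (SVT [Suc K] (Suc N)) = one_row_sum K N"
proof (induction K arbitrary: N)
  case 0
  show ?case
  proof (induction N)
    case (Suc N)
    then show ?case
      using one_row_sum_0_left[of N] one_row_sum_0_left[of "Suc N"]
      by (simp add: card_SVT_single_row_Suc_Suc SVT_empty_row)
  qed (simp add: card_SVT_single_row_one one_row_sum_0_right)
next
  case (Suc K)
  note IH = Suc.IH
  show ?case
  proof (induction N)
    case (Suc N)
    then show ?case
      using IH[of "Suc N"] by (simp add: card_SVT_single_row_Suc_Suc one_row_sum_Suc_Suc)
  qed (simp add: card_SVT_single_row_one one_row_sum_0_right)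
qed

lemma pochhammer_ratio_shift:
  fixes a :: real
  assumes "a > 0"
  shows "pochhammer a m / pochhammer (a + 1) m = a / (a + m)"
proof -
  have "pochhammer a (Suc m) = a * pochhammer (a + 1) m"
    by (rule pochhammer_rec)
  moreover have "pochhammer a (Suc m) = (a + m) * pochhammer a m"
    by (rule pochhammer_rec')
  moreover have "pochhammer (a + 1) m > 0" "a + m > 0"
    using assms by (simp_all add: pochhammer_pos)
  ultimately show ?thesis
    by (simp add: field_simps)
qed

lemma hyp2F1_terminating_minus_one:
  fixes a :: real
  assumes "a > 0"
  shows "hyp2F1 a (- real N) (a + 1) (-1) = (\<Sum>m\<le>N. real (N choose m) * a / (a + m))"
proof -
  have binomial: "real (N choose m) = (-1) ^ m * pochhammer (- real N) m / fact m" for m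
    by (simp add: binomial_gbinomial gbinomial_pochhammer)
  have "hyp2F1 a (- real N) (a + 1) (-1)
      = (\<Sum>m\<le>N. pochhammer a m * pochhammer (- real N) m / pochhammer (a + 1) m * (-1) ^ m / fact m)"
    unfolding hyp2F1_def by (rule suminf_finite) (auto simp: pochhammer_of_nat_eq_0_iff)
  also have "\<dots> = (\<Sum>m\<le>N. pochhammer a m / pochhammer (a + 1) m * ((-1) ^ m * pochhammer (- real N) m / fact m))"
    by (simp add: field_simps)
  also have "\<dots> = (\<Sum>m\<le>N. real (N choose m) * a / (a + m))"
    by (rule sum.cong[OF refl]) (simp only: pochhammer_ratio_shift[OF assms] binomial[symmetric], simp)
  finally show ?thesis .
qed

lemma binomial_product_shift:
  assumes "m \<le> N"
  shows "(N + K + 1 choose (K + 1)) * (N choose m) * (K + 1) =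
    (N + K + 1 choose (K + 1 + m)) * (K + m choose m) * (K + 1 + m)"
proof -
  have "(N + K + 1 choose (K + 1)) * (N choose m) =
      (N + K + 1 choose (K + 1 + m)) * (K + 1 + m choose (K + 1))"
    using choose_mult[of "K + 1" "K + 1 + m" "N + K + 1"] assms by simp
  also have "(K + 1 + m choose (K + 1)) = (K + 1 + m choose m)"
    using binomial_symmetric[of m "K + 1 + m"] by simp
  finally have "(N + K + 1 choose (K + 1)) * (N choose m) * (K + 1) =
      (N + K + 1 choose (K + 1 + m)) * ((K + 1) * (K + 1 + m choose m))"
    by (simp only: ac_simps)
  also have "(K + 1) * (K + 1 + m choose m) = (K + 1 + m) * (K + m choose m)"
    using binomial_absorb_comp[of "K + 1 + m" m] by (simp add: algebra_simps)
  finally show ?thesis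
    by (simp only: ac_simps)
qed

lemma one_row_sum_hyp2F1:
  "real (one_row_sum K N) =
    real (N + K + 1 choose (K + 1)) * hyp2F1 (real K + 1) (- real N) (real K + 2) (-1)"
proof -
  have "real (N + K + 1 choose (K + 1)) * (real (N choose m) * (real K + 1) / (real K + 1 + m))
      = real ((N + K + 1 choose (K + 1 + m)) * (K + m choose m))" if "m \<le> N" for m
  proof -
    have "real ((N + K + 1 choose (K + 1)) * (N choose m) * (K + 1)) =
        real ((N + K + 1 choose (K + 1 + m)) * (K + m choose m) * (K + 1 + m))"
      by (simp only: binomial_product_shift[OF that])
    then show ?thesis
      by (simp add: field_simps)
  qed
  then show ?thesis
    using hyp2F1_terminating_minus_one[of "real K + 1" N]
    by (simp add: one_row_sum_def sum_distrib_left add.assoc)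
qed

theorem corollary3p3:
  fixes n k :: nat
  assumes "n \<ge> 1" and "k \<ge> 1"
  shows "real (card (SVT [k] n)) =
    real ((n + k - 1) choose k) * hyp2F1 (real k) (1 - real n) (real k + 1) (-1)"
proof -
  obtain N K where "n = Suc N" "k = Suc K"
    using assms by (metis Suc_le_D One_nat_def)
  then show ?thesis
    using card_SVT_single_row_eq_one_row_sum[of K N] one_row_sum_hyp2F1[of K N]
    by (simp add: add.commute add.left_commute)
qed

end
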